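(* Let $\hat q$ be an $n\times n$ parametric matrix, let $M$ be an $n\times m$ $(\hat q,1)$-Manin matrix over $\mathfrak R$, let $N$ be an $m\times s$ matrix over $\mathfrak R$ and $H=(h_{il})$ an $n\times s$ matrix over $\mathfrak R$ such that $$[M_{ij},N_{kl}]=-\delta_{jk}h_{il}\qquad(1\le i\le n,\ 1\le j,k\le m,\ 1\le l\le s).$$ Let $r\le m$, let $I=(i_1<\dots<i_r)$ be increasing with entries in $\{1,\dots,n\}$ and $K=(k_1,\dots,k_r)$ a multi-index with entries in $\{1,\dots,s\}$. Let $C$ be the $r\times r$ matrix with entries $C_{ab}=(MN)_{i_ak_b}+(r-b)h_{i_ak_b}$, i.e. $C=(MN)_{IK}+H_{IK}\,\mathrm{diag}(r-1,r-2,\dots,1,0)$, and set $\mathrm{cdet}_{\hat q}(C)=\sum_{\sigma\in S_r}\varepsilon(\hat q,I,\sigma)C_{\sigma(1)1}\cdots C_{\sigma(r)r}$. Then $$\mathrm{cdet}_{\hat q}(C)=\sum_J\mathrm{cdet}_{\hat q}(M_{IJ})\,\mathrm{cdet}(N_{JK}),$$ the sum over all increasing multi-indices $J=(j_1<\dots<j_r)$ with entries in $\{1,\dots,m\}$. In particular, if $m=n=s$, then $\mathrm{cdet}_{\hat q}(MN+H\,\mathrm{diag}(n-1,n-2,\dots,1,0))=\mathrm{cdet}_{\hat q}(M)\,\mathrm{cdet}(N)$.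
   Context: $\mathfrak R$ is an associative unital algebra over $\mathbb C$. A parametric $n\times n$ matrix is a matrix $\hat q=(q_{ij})$ of nonzero complex numbers with $q_{ij}q_{ji}=1$, $q_{ii}=1$. For parametric $\hat q$ ($n\times n$) and $\hat p$ ($m\times m$), an $n\times m$ matrix $M$ over $\mathfrak R$ is a $(\hat q,\hat p)$-Manin matrix if $M_{ik}M_{jk}=q_{ji}M_{jk}M_{ik}$ for $i<j$ and all $k$, and $M_{ik}M_{jl}-q_{ji}p_{kl}M_{jl}M_{ik}+p_{kl}M_{il}M_{jk}-q_{ji}M_{jk}M_{il}=0$ for $i<j$, $k<l$; a $(\hat q,1)$-Manin matrix is one where all $p_{kl}=1$. For increasing $I=(i_1<\dots<i_r)$ and $\sigma\in S_r$, $\varepsilon(\hat q,I,\sigma)=\prod_{s<t,\ \sigma(s)>\sigma(t)}(-q_{i_{\sigma(s)}i_{\sigma(t)}})$. For a matrix $X$, increasing $I$ and any multi-index $J=(j_1,\dots,j_r)$, $\mathrm{cdet}_{\hat q}(X_{IJ})=\sum_{\sigma\in S_r}\varepsilon(\hat q,I,\sigma)X_{i_{\sigma(1)},j_1}\cdots X_{i_{\sigma(r)},j_r}$, and $\mathrm{cdet}$ without subscript is the case where all parameters equal $1$, i.e. $\mathrm{cdet}(X_{IJ})=\sum_{\sigma}\mathrm{sgn}(\sigma)X_{i_{\sigma(1)},j_1}\cdots X_{i_{\sigma(r)},j_r}$; for square $X$, $\mathrm{cdet}_{\hat q}(X)$ is the case $I=J=(1,\dots,n)$. *)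

theory Defs
  imports Complex_Main "HOL-Combinatorics.Permutations"
begin

text \<open>An associative unital algebra over the complex numbers is modelled as a ring
  'a :: ring_1 together with a unital ring homomorphism  c : complex \<Rightarrow> 'a
  whose image is central (the structure map of the algebra; c z * x is scalar multiplication).\<close>
definition calg_emb :: "(complex \<Rightarrow> 'a::ring_1) \<Rightarrow> bool" where
  "calg_emb c \<longleftrightarrow> c 1 = 1 \<and> (\<forall>z w. c (z + w) = c z + c w) \<and> (\<forall>z w. c (z * w) = c z * c w)
     \<and> (\<forall>z x. c z * x = x * c z)"

text \<open>Indices are 0-based: an n x n matrix is a function on {0..<n} x {0..<n}.\<close>
definition parametric_mat :: "nat \<Rightarrow> (nat \<Rightarrow> nat \<Rightarrow> complex) \<Rightarrow> bool" where
  "parametric_mat n q \<longleftrightarrow> (\<forall>i<n. \<forall>j<n. q i j \<noteq> 0 \<and> q i j * q j i = 1) \<and> (\<forall>i<n. q i i = 1)"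

text \<open>(q,1)-Manin matrix (all p_kl = 1), n x m, over the algebra with structure map c.\<close>
definition q1_manin :: "(complex \<Rightarrow> 'a::ring_1) \<Rightarrow> nat \<Rightarrow> nat \<Rightarrow> (nat \<Rightarrow> nat \<Rightarrow> complex)
    \<Rightarrow> (nat \<Rightarrow> nat \<Rightarrow> 'a) \<Rightarrow> bool" where
  "q1_manin c n m q M \<longleftrightarrow>
     (\<forall>i j k. i < j \<and> j < n \<and> k < m \<longrightarrow> M i k * M j k = c (q j i) * M j k * M i k) \<and>
     (\<forall>i j k l. i < j \<and> j < n \<and> k < l \<and> l < m \<longrightarrow>
        M i k * M j l - c (q j i * 1) * M j l * M i k + c 1 * M i l * M j k
          - c (q j i) * M j k * M i l = 0)"

definition qeps :: "(nat \<Rightarrow> nat \<Rightarrow> complex) \<Rightarrow> nat list \<Rightarrow> (nat \<Rightarrow> nat) \<Rightarrow> complex" where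
  "qeps q I \<sigma> = (\<Prod>(s,t) \<in> {(s,t). s < t \<and> t < length I \<and> \<sigma> s > \<sigma> t}.
                    - q (I ! \<sigma> s) (I ! \<sigma> t))"

definition cdetq :: "(complex \<Rightarrow> 'a::ring_1) \<Rightarrow> (nat \<Rightarrow> nat \<Rightarrow> complex) \<Rightarrow> nat list \<Rightarrow> nat list
    \<Rightarrow> (nat \<Rightarrow> nat \<Rightarrow> 'a) \<Rightarrow> 'a" where
  "cdetq c q I J X = (\<Sum>\<sigma> | \<sigma> permutes {0..<length I}.
      c (qeps q I \<sigma>) * prod_list (map (\<lambda>k. X (I ! \<sigma> k) (J ! k)) [0..<length I]))"

definition cdet :: "(complex \<Rightarrow> 'a::ring_1) \<Rightarrow> nat list \<Rightarrow> nat list \<Rightarrow> (nat \<Rightarrow> nat \<Rightarrow> 'a) \<Rightarrow> 'a" where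
  "cdet c I J X = cdetq c (\<lambda>_ _. 1) I J X"

definition matmul :: "nat \<Rightarrow> (nat \<Rightarrow> nat \<Rightarrow> 'a::ring_1) \<Rightarrow> (nat \<Rightarrow> nat \<Rightarrow> 'a) \<Rightarrow> nat \<Rightarrow> nat \<Rightarrow> 'a" where
  "matmul m M N i l = (\<Sum>j<m. M i j * N j l)"

end

theory Submission
  imports Defs
begin

text \<open>Expand cdet_q(C) column by column, starting from the right. Column p of MN is the sum over
  j of the column M_j times the entry N_{j,k_p}. Moving that entry to the far right through the
  columns of M already standing to its right costs, by [M_ij, N_kl] = -delta_jk h_il, one extra
  term for each of them, in which that column is replaced by a column of H. The q-column
  determinant changes sign when two columns are exchanged across columns that pairwise satisfy
  the Manin relations -- which holds for any two columns of M, and for a column of M and a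
  column of H -- so all these extra terms equal minus the determinant with the H-column in
  position p, and together they cancel the diagonal correction (r - 1 - p) H.
  What remains is the sum over all index lists J of cdet_q(M_{IJ}) N_{j_1 k_1} ... N_{j_r k_r}.
  Lists with a repeated index contribute nothing; grouping the others by their sorted version
  turns the N-products into cdet(N_{JK}).\<close>

section \<open>Adjacent transpositions and inversions\<close>

definition adj_swap :: "nat \<Rightarrow> nat \<Rightarrow> nat" where
  "adj_swap b = Transposition.transpose b (Suc b)"

lemma adj_swap_adj_swap [simp]: "adj_swap b (adj_swap b x) = x"
  unfolding adj_swap_def by simp

lemma adj_swap_apply [simp]: "adj_swap b b = Suc b" "adj_swap b (Suc b) = b"
  unfolding adj_swap_def by simp_all

lemma adj_swap_apply_other: "x \<noteq> b \<Longrightarrow> x \<noteq> Suc b \<Longrightarrow> adj_swap b x = x"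
  unfolding adj_swap_def by simp

lemma comp_adj_swap_adj_swap [simp]: "\<sigma> \<circ> adj_swap b \<circ> adj_swap b = \<sigma>"
  by (rule ext) simp

lemma adj_swap_less_mono: "x < y \<Longrightarrow> (x, y) \<noteq> (b, Suc b) \<Longrightarrow> adj_swap b x < adj_swap b y"
  unfolding adj_swap_def transpose_def by auto

lemma adj_swap_less: "Suc b < r \<Longrightarrow> y < r \<Longrightarrow> adj_swap b y < r"
  unfolding adj_swap_def transpose_def by auto

lemma adj_swap_permutes: "Suc b < r \<Longrightarrow> adj_swap b permutes {0..<r}"
  unfolding adj_swap_def by (rule permutes_swap_id) auto

lemma permute_list_adj_swap:
  assumes "Suc b < length L"
  shows "permute_list (adj_swap b) L = take b L @ [L ! Suc b, L ! b] @ drop (Suc (Suc b)) L"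
proof (rule nth_equalityI)
  fix i assume "i < length (permute_list (adj_swap b) L)"
  then have i: "i < length L" by simp
  consider "i < b" | "i = b" | "i = Suc b" | "Suc b < i" by linarith
  then show "permute_list (adj_swap b) L ! i = (take b L @ [L ! Suc b, L ! b] @ drop (Suc (Suc b)) L) ! i"
  proof cases
    case 4
    then have "Suc (Suc (i - 2)) = i" by simp
    with 4 i show ?thesis by (simp add: permute_list_def nth_append adj_swap_apply_other)
  qed (use assms i in \<open>auto simp: permute_list_def nth_append adj_swap_apply_other\<close>)
qed (use assms in \<open>simp add: permute_list_def\<close>)

lemma sum_permutes_adj_swap_pairs:
  assumes b: "Suc b < r"
  shows "(\<Sum>\<sigma> | \<sigma> permutes {0..<r}. f \<sigma>)
       = (\<Sum>\<sigma> | \<sigma> permutes {0..<r} \<and> \<sigma> b < \<sigma> (Suc b). f \<sigma> + f (\<sigma> \<circ> adj_swap b))"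
proof -
  let ?A = "{\<sigma>. \<sigma> permutes {0..<r} \<and> \<sigma> b < \<sigma> (Suc b)}"
  let ?B = "{\<sigma>. \<sigma> permutes {0..<r} \<and> \<not> \<sigma> b < \<sigma> (Suc b)}"
  have B: "?B = (\<lambda>\<sigma>. \<sigma> \<circ> adj_swap b) ` ?A"
  proof (intro equalityI subsetI)
    fix \<sigma> assume "\<sigma> \<in> ?B"
    then have p: "\<sigma> permutes {0..<r}" and nl: "\<not> \<sigma> b < \<sigma> (Suc b)" by auto
    have "\<sigma> b \<noteq> \<sigma> (Suc b)" using permutes_inj[OF p] by (auto dest: injD)
    then have "\<sigma> (Suc b) < \<sigma> b" using nl by simp
    then have "\<sigma> \<circ> adj_swap b \<in> ?A"
      using permutes_compose[OF adj_swap_permutes[OF b] p] by simp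
    then show "\<sigma> \<in> (\<lambda>\<sigma>. \<sigma> \<circ> adj_swap b) ` ?A"
      by (rule image_eqI[rotated]) simp
  next
    fix \<sigma> assume "\<sigma> \<in> (\<lambda>\<sigma>. \<sigma> \<circ> adj_swap b) ` ?A"
    then obtain \<tau> where "\<tau> \<in> ?A" "\<sigma> = \<tau> \<circ> adj_swap b" by auto
    then show "\<sigma> \<in> ?B" using permutes_compose[OF adj_swap_permutes[OF b]] by auto
  qed
  have inj: "inj_on (\<lambda>\<sigma>. \<sigma> \<circ> adj_swap b) ?A"
    by (rule inj_onI) (metis comp_adj_swap_adj_swap)
  have fin: "finite {\<sigma>. \<sigma> permutes {0..<r}}" by (rule finite_permutations) simp
  have split: "{\<sigma>. \<sigma> permutes {0..<r}} = ?A \<union> ?B" by auto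
  have "(\<Sum>\<sigma> | \<sigma> permutes {0..<r}. f \<sigma>) = sum f ?A + sum f ?B"
    unfolding split by (rule sum.union_disjoint) (use fin in auto)
  also have "sum f ?B = sum (f \<circ> (\<lambda>\<sigma>. \<sigma> \<circ> adj_swap b)) ?A"
    unfolding B by (rule sum.reindex[OF inj])
  finally show ?thesis by (simp add: sum.distrib)
qed

definition inversions :: "nat \<Rightarrow> (nat \<Rightarrow> nat) \<Rightarrow> (nat \<times> nat) set" where
  "inversions r \<sigma> = {(s, t). s < t \<and> t < r \<and> \<sigma> t < \<sigma> s}"

lemma finite_inversions: "finite (inversions r \<sigma>)"
  by (rule finite_subset[of _ "{0..<r} \<times> {0..<r}"]) (auto simp: inversions_def)

lemma qeps_eq_prod_inversions:
  "qeps q I \<sigma> = (\<Prod>(s, t)\<in>inversions (length I) \<sigma>. - q (I ! \<sigma> s) (I ! \<sigma> t))"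
  unfolding qeps_def inversions_def by (rule prod.cong) auto

lemma qeps_const_one_length:
  "length I = length J \<Longrightarrow> qeps (\<lambda>_ _. 1) I \<sigma> = qeps (\<lambda>_ _. 1) J \<sigma>"
  unfolding qeps_def by simp

lemma inj_on_adj_swap_pair: "inj_on (\<lambda>(x, y). (adj_swap b x, adj_swap b y)) A"
  by (rule inj_onI) (auto, metis adj_swap_adj_swap, metis adj_swap_adj_swap)

lemma inversions_comp_adj_swap:
  assumes b: "Suc b < r" and lt: "\<sigma> b < \<sigma> (Suc b)"
  shows "inversions r (\<sigma> \<circ> adj_swap b)
           = insert (b, Suc b) ((\<lambda>(x, y). (adj_swap b x, adj_swap b y)) ` inversions r \<sigma>)"
    and "(b, Suc b) \<notin> (\<lambda>(x, y). (adj_swap b x, adj_swap b y)) ` inversions r \<sigma>"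
proof -
  let ?g = "\<lambda>(x, y). (adj_swap b x, adj_swap b y)"
  show "inversions r (\<sigma> \<circ> adj_swap b) = insert (b, Suc b) (?g ` inversions r \<sigma>)"
  proof (intro equalityI subsetI)
    fix p assume p: "p \<in> inversions r (\<sigma> \<circ> adj_swap b)"
    obtain x y where xy: "p = (x, y)" by (cases p)
    have h: "x < y" "y < r" "\<sigma> (adj_swap b y) < \<sigma> (adj_swap b x)"
      using p xy by (auto simp: inversions_def)
    show "p \<in> insert (b, Suc b) (?g ` inversions r \<sigma>)"
    proof (cases "(x, y) = (b, Suc b)")
      case False
      have "(adj_swap b x, adj_swap b y) \<in> inversions r \<sigma>"
        using h adj_swap_less_mono[OF h(1) False] adj_swap_less[OF b h(2)] by (auto simp: inversions_def)
      then have "?g (adj_swap b x, adj_swap b y) \<in> ?g ` inversions r \<sigma>" by (rule imageI)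
      then show ?thesis using xy by simp
    qed (use xy in simp)
  next
    fix p assume p: "p \<in> insert (b, Suc b) (?g ` inversions r \<sigma>)"
    show "p \<in> inversions r (\<sigma> \<circ> adj_swap b)"
    proof (cases "p = (b, Suc b)")
      case True then show ?thesis using b lt by (simp add: inversions_def)
    next
      case False
      then obtain x y where xy: "(x, y) \<in> inversions r \<sigma>" "p = (adj_swap b x, adj_swap b y)"
        using p by auto
      have h: "x < y" "y < r" "\<sigma> y < \<sigma> x" using xy by (auto simp: inversions_def)
      have "(x, y) \<noteq> (b, Suc b)" using h lt by auto
      then show ?thesis
        using xy h adj_swap_less_mono[OF h(1)] adj_swap_less[OF b h(2)] by (auto simp: inversions_def)
    qed
  qed
  show "(b, Suc b) \<notin> ?g ` inversions r \<sigma>"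
  proof
    assume "(b, Suc b) \<in> ?g ` inversions r \<sigma>"
    then obtain x y where "(x, y) \<in> inversions r \<sigma>" "adj_swap b x = b" "adj_swap b y = Suc b"
      by auto
    then have "x = Suc b" "y = b" "x < y"
      by (metis adj_swap_adj_swap adj_swap_apply(2), metis adj_swap_adj_swap adj_swap_apply(1),
          auto simp: inversions_def)
    then show False by simp
  qed
qed

lemma card_inversions_comp_adj_swap:
  "Suc b < r \<Longrightarrow> \<sigma> b < \<sigma> (Suc b) \<Longrightarrow>
     card (inversions r (\<sigma> \<circ> adj_swap b)) = Suc (card (inversions r \<sigma>))"
  using inversions_comp_adj_swap[of b r \<sigma>] finite_inversions
  by (simp add: card_image[OF inj_on_adj_swap_pair])

lemma qeps_comp_adj_swap:
  assumes b: "Suc b < length I" and lt: "\<sigma> b < \<sigma> (Suc b)"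
  shows "qeps q I (\<sigma> \<circ> adj_swap b) = - q (I ! \<sigma> (Suc b)) (I ! \<sigma> b) * qeps q I \<sigma>"
proof -
  let ?g = "\<lambda>(x, y). (adj_swap b x, adj_swap b y)"
  let ?f = "\<lambda>(s, t). - q (I ! (\<sigma> \<circ> adj_swap b) s) (I ! (\<sigma> \<circ> adj_swap b) t)"
  have "qeps q I (\<sigma> \<circ> adj_swap b) = ?f (b, Suc b) * prod ?f (?g ` inversions (length I) \<sigma>)"
    unfolding qeps_eq_prod_inversions inversions_comp_adj_swap[OF b lt]
    by (rule prod.insert) (use inversions_comp_adj_swap(2)[OF b lt] finite_inversions in auto)
  also have "prod ?f (?g ` inversions (length I) \<sigma>) = prod (?f \<circ> ?g) (inversions (length I) \<sigma>)"
    by (rule prod.reindex[OF inj_on_adj_swap_pair])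
  also have "\<dots> = qeps q I \<sigma>"
    unfolding qeps_eq_prod_inversions by (rule prod.cong) auto
  finally show ?thesis by (simp add: comp_def)
qed

lemma permutes_ascending_eq_id:
  assumes p: "\<tau> permutes {0..<r}" and asc: "\<And>b. Suc b < r \<Longrightarrow> \<tau> b < \<tau> (Suc b)"
  shows "\<tau> = id"
proof -
  have "sorted_wrt (<) (map \<tau> [0..<r])"
    using asc by (subst sorted_wrt_iff_nth_Suc_transp) auto
  moreover have "set (map \<tau> [0..<r]) = set [0..<r]"
    using permutes_image[OF p] by simp
  ultimately have map_eq: "map \<tau> [0..<r] = [0..<r]"
    by (intro sorted_distinct_set_unique) (auto simp: strict_sorted_iff)
  have "\<tau> k = k" for k
  proof (cases "k < r")
    case True
    then show ?thesis using arg_cong[OF map_eq, of "\<lambda>xs. xs ! k"] by simp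
  qed (use permutes_not_in[OF p] in simp)
  then show ?thesis by auto
qed

section \<open>Sorted lists and permutations\<close>

lemma inj_on_permute_list_sorted:
  fixes A :: "'a::linorder set"
  shows "inj_on (\<lambda>(S, \<tau>). permute_list \<tau> S)
     ({S. length S = l \<and> sorted_wrt (<) S \<and> set S \<subseteq> A} \<times> {\<tau>. \<tau> permutes {..<l}})"
proof (rule inj_onI)
  fix x y
  assume "x \<in> {S. length S = l \<and> sorted_wrt (<) S \<and> set S \<subseteq> A} \<times> {\<tau>. \<tau> permutes {..<l}}"
    and "y \<in> {S. length S = l \<and> sorted_wrt (<) S \<and> set S \<subseteq> A} \<times> {\<tau>. \<tau> permutes {..<l}}"
    and "(\<lambda>(S, \<tau>). permute_list \<tau> S) x = (\<lambda>(S, \<tau>). permute_list \<tau> S) y"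
  moreover obtain S \<tau> S' \<tau>' where xy: "x = (S, \<tau>)" "y = (S', \<tau>')" by fastforce
  ultimately have S: "sorted_wrt (<) S" "sorted_wrt (<) S'" and l: "length S = l" "length S' = l"
    and p: "\<tau> permutes {..<l}" "\<tau>' permutes {..<l}"
    and eq: "permute_list \<tau> S = permute_list \<tau>' S'" by auto
  have "set S = set S'" using arg_cong[OF eq, of set] p l by simp
  with S have SS: "S = S'" by (simp add: sorted_distinct_set_unique strict_sorted_iff)
  have "\<tau> k = \<tau>' k" for k
  proof (cases "k < l")
    case True
    then have "S ! \<tau> k = S ! \<tau>' k"
      using arg_cong[OF eq, of "\<lambda>xs. xs ! k"] permute_list_nth p l SS by metis
    moreover have "\<tau> k < l" "\<tau>' k < l"
      using permutes_in_image[OF p(1)] permutes_in_image[OF p(2)] True by auto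
    ultimately show ?thesis using nth_eq_iff_index_eq S(1) l by (metis strict_sorted_iff)
  qed (use permutes_not_in[OF p(1)] permutes_not_in[OF p(2)] in simp)
  then show "x = y" using SS xy by auto
qed

lemma bij_betw_permute_list_sorted:
  fixes A :: "'a::linorder set"
  shows "bij_betw (\<lambda>(S, \<tau>). permute_list \<tau> S)
     ({S. length S = l \<and> sorted_wrt (<) S \<and> set S \<subseteq> A} \<times> {\<tau>. \<tau> permutes {..<l}})
     {J. length J = l \<and> distinct J \<and> set J \<subseteq> A}"
proof (rule bij_betw_imageI[OF inj_on_permute_list_sorted], intro equalityI subsetI)
  fix J assume "J \<in> (\<lambda>(S, \<tau>). permute_list \<tau> S) `
    ({S. length S = l \<and> sorted_wrt (<) S \<and> set S \<subseteq> A} \<times> {\<tau>. \<tau> permutes {..<l}})"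
  then obtain S \<tau> where S: "length S = l" "sorted_wrt (<) S" "set S \<subseteq> A"
    and p: "\<tau> permutes {..<l}" and J: "J = permute_list \<tau> S" by auto
  have "distinct J"
    unfolding J using mset_eq_imp_distinct_iff[OF mset_permute_list] p S
    by (simp add: strict_sorted_iff)
  then show "J \<in> {J. length J = l \<and> distinct J \<and> set J \<subseteq> A}" using S p J by simp
next
  fix J assume J: "J \<in> {J. length J = l \<and> distinct J \<and> set J \<subseteq> A}"
  obtain \<tau> where p: "\<tau> permutes {..<length (sort J)}" and J_eq: "permute_list \<tau> (sort J) = J"
    by (rule mset_eq_permutation[of J "sort J"]) simp
  moreover have "sort J \<in> {S. length S = l \<and> sorted_wrt (<) S \<and> set S \<subseteq> A}"
    using J by (simp add: strict_sorted_iff)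
  ultimately show "J \<in> (\<lambda>(S, \<tau>). permute_list \<tau> S) `
    ({S. length S = l \<and> sorted_wrt (<) S \<and> set S \<subseteq> A} \<times> {\<tau>. \<tau> permutes {..<l}})"
    using J by (intro image_eqI[where x = "(sort J, \<tau>)"]) auto
qed

lemma sum_lists_eq_sum_sorted_permute_list:
  fixes A :: "'a::linorder set" and F :: "'a list \<Rightarrow> 'b::comm_monoid_add"
  assumes A: "finite A"
    and nondistinct: "\<And>J. length J = l \<Longrightarrow> set J \<subseteq> A \<Longrightarrow> \<not> distinct J \<Longrightarrow> F J = 0"
  shows "(\<Sum>J | length J = l \<and> set J \<subseteq> A. F J)
       = (\<Sum>S | length S = l \<and> sorted_wrt (<) S \<and> set S \<subseteq> A.
            \<Sum>\<tau> | \<tau> permutes {..<l}. F (permute_list \<tau> S))"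
proof -
  have "(\<Sum>J | length J = l \<and> set J \<subseteq> A. F J) = (\<Sum>J | length J = l \<and> distinct J \<and> set J \<subseteq> A. F J)"
    using finite_lists_length_eq[OF A, of l] nondistinct
    by (intro sum.mono_neutral_right) (auto simp: conj_commute)
  also have "\<dots> = (\<Sum>(S, \<tau>) \<in> {S. length S = l \<and> sorted_wrt (<) S \<and> set S \<subseteq> A} \<times> {\<tau>. \<tau> permutes {..<l}}.
                     F (permute_list \<tau> S))"
    using sum.reindex_bij_betw[OF bij_betw_permute_list_sorted, of F l A, symmetric]
    by (simp add: case_prod_beta)
  also have "\<dots> = (\<Sum>S | length S = l \<and> sorted_wrt (<) S \<and> set S \<subseteq> A.
                     \<Sum>\<tau> | \<tau> permutes {..<l}. F (permute_list \<tau> S))"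
    by (rule sum.cartesian_product[symmetric])
  finally show ?thesis .
qed

lemma sorted_lists_upt_eq:
  "{J. length J = n \<and> sorted_wrt (<) J \<and> set J \<subseteq> {..<n}} = {[0..<n]}"
proof (intro equalityI subsetI)
  fix J assume "J \<in> {J. length J = n \<and> sorted_wrt (<) J \<and> set J \<subseteq> {..<n}}"
  then have J: "length J = n" "sorted J" "distinct J" "set J \<subseteq> {..<n}"
    by (auto simp: strict_sorted_iff)
  then have "set J = {..<n}"
    by (intro card_subset_eq) (auto simp: distinct_card)
  with J show "J \<in> {[0..<n]}"
    by (simp add: sorted_distinct_set_unique lessThan_atLeast0)
qed (auto simp: lessThan_atLeast0)

section \<open>Column determinants of lists of columns\<close>

fun col_prod :: "(nat \<Rightarrow> 'a::monoid_mult) list \<Rightarrow> (nat \<Rightarrow> nat) \<Rightarrow> nat \<Rightarrow> 'a" where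
  "col_prod [] g k = 1"
| "col_prod (v # vs) g k = v (g k) * col_prod vs g (Suc k)"

lemma col_prod_append: "col_prod (xs @ ys) g k = col_prod xs g k * col_prod ys g (k + length xs)"
  by (induction xs arbitrary: k) (simp_all add: mult.assoc)

lemma col_prod_eq_prod_list:
  "col_prod vs g k = prod_list (map (\<lambda>i. (vs ! i) (g (k + i))) [0..<length vs])"
proof (induction vs arbitrary: k)
  case (Cons v vs)
  have "[0..<length (v # vs)] = 0 # map Suc [0..<length vs]"
    by (simp add: upt_conv_Cons map_Suc_upt del: upt_Suc)
  then show ?case using Cons.IH by (simp add: o_def)
qed simp

lemma col_prod_cong:
  assumes "length vs = length ws" "\<And>i. i < length vs \<Longrightarrow> (vs ! i) (g (k + i)) = (ws ! i) (g' (k + i))"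
  shows "col_prod vs g k = col_prod ws g' k"
  unfolding col_prod_eq_prod_list assms(1)[symmetric]
  by (intro arg_cong[where f = prod_list] map_cong) (simp_all add: assms(2))

lemma col_prod_two_cols:
  assumes "length pre = b"
  shows "col_prod (pre @ [x, y] @ post) g 0
           = col_prod pre g 0 * (x (g b) * (y (g (Suc b)) * col_prod post g (Suc (Suc b))))"
    and "col_prod (pre @ [x, y] @ post) (g \<circ> adj_swap b) 0
           = col_prod pre g 0 * (x (g (Suc b)) * (y (g b) * col_prod post g (Suc (Suc b))))"
proof -
  have "col_prod pre (g \<circ> adj_swap b) 0 = col_prod pre g 0"
    by (rule col_prod_cong) (simp_all add: assms adj_swap_apply_other)
  moreover have "col_prod post (g \<circ> adj_swap b) (Suc (Suc b)) = col_prod post g (Suc (Suc b))"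
    by (rule col_prod_cong) (simp_all add: adj_swap_apply_other)
  ultimately show "col_prod (pre @ [x, y] @ post) (g \<circ> adj_swap b) 0
           = col_prod pre g 0 * (x (g (Suc b)) * (y (g b) * col_prod post g (Suc (Suc b))))"
    by (simp add: col_prod_append assms)
qed (simp add: col_prod_append assms)

text \<open>Columns are given as functions of the row index, so that a single column can be replaced
  by a linear combination of columns; cdetq is the case of matrix columns.\<close>
definition cdet_cols :: "(complex \<Rightarrow> 'a::ring_1) \<Rightarrow> (nat \<Rightarrow> nat \<Rightarrow> complex) \<Rightarrow> nat list
    \<Rightarrow> (nat \<Rightarrow> 'a) list \<Rightarrow> 'a" where
  "cdet_cols c q I vs =
     (\<Sum>\<sigma> | \<sigma> permutes {0..<length I}. c (qeps q I \<sigma>) * col_prod vs (\<lambda>k. I ! \<sigma> k) 0)"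

lemma cdetq_eq_cdet_cols:
  assumes "length J = length I"
  shows "cdetq c q I J X = cdet_cols c q I (map (\<lambda>j i. X i j) J)"
  unfolding cdetq_def cdet_cols_def col_prod_eq_prod_list
  by (intro sum.cong arg_cong[where f = "\<lambda>p. _ * prod_list p"] map_cong) (simp_all add: assms)

lemma cdet_cols_sum:
  "cdet_cols c q I (pre @ [\<lambda>x. (\<Sum>j\<in>A. f j x)] @ post) = (\<Sum>j\<in>A. cdet_cols c q I (pre @ [f j] @ post))"
  unfolding cdet_cols_def
  by (simp add: col_prod_append sum_distrib_left sum_distrib_right) (rule sum.swap)

lemma cdet_cols_add:
  "cdet_cols c q I (pre @ [\<lambda>x. u x + w x] @ post)
     = cdet_cols c q I (pre @ [u] @ post) + cdet_cols c q I (pre @ [w] @ post)"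
  unfolding cdet_cols_def by (simp add: col_prod_append distrib_left distrib_right sum.distrib)

lemma cdet_cols_zero_col: "cdet_cols c q I (pre @ [\<lambda>x. 0] @ post) = 0"
  unfolding cdet_cols_def by (simp add: col_prod_append)

lemma cdet_cols_mult_central:
  assumes central: "\<And>y. a * y = y * a"
  shows "cdet_cols c q I (pre @ [\<lambda>x. a * u x] @ post) = a * cdet_cols c q I (pre @ [u] @ post)"
proof -
  have "X * (a * Y) = a * (X * Y)" for X Y :: 'a
    by (metis central mult.assoc)
  then show ?thesis
    unfolding cdet_cols_def by (simp add: col_prod_append sum_distrib_left mult.assoc)
qed

lemma cdet_cols_mult_right_last:
  "cdet_cols c q I (vs @ [\<lambda>x. u x * z]) = cdet_cols c q I (vs @ [u]) * z"
  unfolding cdet_cols_def by (simp add: col_prod_append sum_distrib_right mult.assoc)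

lemma cdet_cols_move_factor:
  "cdet_cols c q I (pre @ [\<lambda>x. u x * z, w] @ post) = cdet_cols c q I (pre @ [u, \<lambda>y. z * w y] @ post)"
  unfolding cdet_cols_def by (simp add: col_prod_append mult.assoc)

lemma cdet_cols_cong_col:
  assumes "length (pre @ [f] @ post) = length I" "\<And>x. x \<in> set I \<Longrightarrow> f x = g x"
  shows "cdet_cols c q I (pre @ [f] @ post) = cdet_cols c q I (pre @ [g] @ post)"
  unfolding cdet_cols_def
proof (intro sum.cong refl arg_cong[where f = "\<lambda>p. _ * p"] col_prod_cong)
  fix \<sigma> i assume "\<sigma> \<in> {\<sigma>. \<sigma> permutes {0..<length I}}" "i < length (pre @ [f] @ post)"
  then have "I ! \<sigma> (0 + i) \<in> set I" using assms(1) permutes_in_image by fastforce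
  then show "((pre @ [f] @ post) ! i) (I ! \<sigma> (0 + i)) = ((pre @ [g] @ post) ! i) (I ! \<sigma> (0 + i))"
    using assms(2) by (auto simp: nth_append nth_Cons split: nat.split)
qed simp

lemma cdet_cols_commute_right:
  assumes "length (pre @ [u] @ ws) = length I"
    and "\<And>t x. t < length ws \<Longrightarrow> x \<in> set I \<Longrightarrow> z * (ws ! t) x = (ws ! t) x * z + d t x"
  shows "cdet_cols c q I (pre @ [\<lambda>x. u x * z] @ ws) = cdet_cols c q I (pre @ [u] @ ws) * z
           + (\<Sum>t<length ws. cdet_cols c q I (pre @ [u] @ ws[t := d t]))"
  using assms
proof (induction ws arbitrary: pre u d)
  case Nil
  then show ?case using cdet_cols_mult_right_last[of c q I pre u z] by simp
next
  case (Cons w ws)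
  let ?D = "cdet_cols c q I"
  have "?D (pre @ [\<lambda>x. u x * z] @ w # ws) = ?D (pre @ [u, \<lambda>y. z * w y] @ ws)"
    using cdet_cols_move_factor by simp
  also have "\<dots> = ?D ((pre @ [u]) @ [\<lambda>y. w y * z + d 0 y] @ ws)"
    using cdet_cols_cong_col[of "pre @ [u]" "\<lambda>y. z * w y" ws I "\<lambda>y. w y * z + d 0 y"]
      Cons.prems(1) Cons.prems(2)[of 0] by simp
  also have "\<dots> = ?D ((pre @ [u]) @ [\<lambda>y. w y * z] @ ws) + ?D ((pre @ [u]) @ [d 0] @ ws)"
    by (rule cdet_cols_add)
  also have "?D ((pre @ [u]) @ [\<lambda>y. w y * z] @ ws) = ?D ((pre @ [u]) @ [w] @ ws) * z
           + (\<Sum>t<length ws. ?D ((pre @ [u]) @ [w] @ ws[t := d (Suc t)]))"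
  proof (rule Cons.IH)
    fix t x assume "t < length ws" "x \<in> set I"
    then show "z * (ws ! t) x = (ws ! t) x * z + d (Suc t) x"
      using Cons.prems(2)[of "Suc t" x] by simp
  qed (use Cons.prems(1) in simp)
  finally show ?case
    by (simp only: length_Cons sum.lessThan_Suc_shift) (simp add: algebra_simps)
qed

text \<open>The cross Manin relation of two columns; for x = y it is twice the first Manin relation
  x u x w = q_wu x w x u. It is exactly what makes the column determinant antisymmetric in
  the columns x and y.\<close>
definition manin_pair :: "(complex \<Rightarrow> 'a::ring_1) \<Rightarrow> (nat \<Rightarrow> nat \<Rightarrow> complex) \<Rightarrow> nat
    \<Rightarrow> (nat \<Rightarrow> 'a) \<Rightarrow> (nat \<Rightarrow> 'a) \<Rightarrow> bool" where
  "manin_pair c q n x y \<longleftrightarrow> (\<forall>u w. u < w \<longrightarrow> w < n \<longrightarrow>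
      x u * y w - c (q w u) * (x w * y u) + y u * x w - c (q w u) * (y w * x u) = 0)"

lemma manin_pair_sym: "manin_pair c q n x y \<Longrightarrow> manin_pair c q n y x"
  unfolding manin_pair_def by (auto simp: algebra_simps)

locale complex_algebra =
  fixes c :: "complex \<Rightarrow> 'a::ring_1"
  assumes calg: "calg_emb c"
begin

lemma c_one: "c 1 = 1" and c_add: "c (z + w) = c z + c w" and c_mult: "c (z * w) = c z * c w"
  and c_central: "c z * x = x * c z"
  using calg unfolding calg_emb_def by blast+

lemma c_minus: "c (- z) = - c z"
proof -
  have "c 0 = 0" using c_add[of 0 0] by simp
  then have "c z + c (- z) = 0" using c_add[of z "- z"] by simp
  then show ?thesis by (simp add: eq_neg_iff_add_eq_0 add.commute)
qed

lemma self_eq_neg_imp_zero: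
  fixes X :: 'a
  assumes "X = - X"
  shows "X = 0"
proof -
  have "X = c (1/2 + 1/2) * X" by (simp add: c_one)
  also have "\<dots> = c (1/2) * (X + X)" by (simp only: c_add) (simp add: algebra_simps)
  also have "X + X = 0" using assms by (simp add: eq_neg_iff_add_eq_0)
  finally show ?thesis by simp
qed

lemma cdet_cols_swap_adjacent:
  assumes len: "length (pre @ [x, y] @ post) = length I" and I: "sorted_wrt (<) I" "set I \<subseteq> {..<n}"
    and xy: "manin_pair c q n x y"
  shows "cdet_cols c q I (pre @ [x, y] @ post) = - cdet_cols c q I (pre @ [y, x] @ post)"
proof -
  define b where "b = length pre"
  have b: "Suc b < length I" using len by (simp add: b_def)
  define T where "T vs \<sigma> = c (qeps q I \<sigma>) * col_prod vs (\<lambda>k. I ! \<sigma> k) 0" for vs \<sigma>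
  let ?A = "{\<sigma>. \<sigma> permutes {0..<length I} \<and> \<sigma> b < \<sigma> (Suc b)}"
  have pairs: "cdet_cols c q I vs = (\<Sum>\<sigma>\<in>?A. T vs \<sigma> + T vs (\<sigma> \<circ> adj_swap b))" for vs
    unfolding cdet_cols_def T_def by (rule sum_permutes_adj_swap_pairs[OF b])
  \<comment> \<open>In each pair the four terms factor through the cross relation at the rows
    I ! \<sigma> b < I ! \<sigma> (Suc b).\<close>
  have cancel: "T (pre @ [x, y] @ post) \<sigma> + T (pre @ [x, y] @ post) (\<sigma> \<circ> adj_swap b)
        + (T (pre @ [y, x] @ post) \<sigma> + T (pre @ [y, x] @ post) (\<sigma> \<circ> adj_swap b)) = 0"
    if \<sigma>: "\<sigma> \<in> ?A" for \<sigma>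
  proof -
    have p: "\<sigma> permutes {0..<length I}" and lt: "\<sigma> b < \<sigma> (Suc b)" using \<sigma> by auto
    have in_I: "\<sigma> (Suc b) < length I" using permutes_in_image[OF p] b by auto
    define u where "u = I ! \<sigma> b"
    define w where "w = I ! \<sigma> (Suc b)"
    have "u < w" unfolding u_def w_def using sorted_wrt_nth_less[OF I(1) lt in_I] .
    moreover have "w < n" using I(2) in_I unfolding w_def by (meson lessThan_iff nth_mem subsetD)
    ultimately have rel: "x u * y w - c (q w u) * (x w * y u) + y u * x w - c (q w u) * (y w * x u) = 0"
      using xy unfolding manin_pair_def by blast
    define P where "P = col_prod pre (\<lambda>k. I ! \<sigma> k) 0"
    define Q where "Q = col_prod post (\<lambda>k. I ! \<sigma> k) (Suc (Suc b))"
    define e where "e = c (qeps q I \<sigma>)"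
    have e_swap: "c (qeps q I (\<sigma> \<circ> adj_swap b)) = - (c (q w u) * e)"
      unfolding e_def w_def u_def qeps_comp_adj_swap[OF b lt] by (simp add: c_mult c_minus)
    have cols: "col_prod (pre @ [v, v'] @ post) (\<lambda>k. I ! \<sigma> k) 0 = P * (v u * (v' w * Q))"
      "col_prod (pre @ [v, v'] @ post) (\<lambda>k. I ! (\<sigma> \<circ> adj_swap b) k) 0 = P * (v w * (v' u * Q))"
      for v v' :: "nat \<Rightarrow> 'a"
      using col_prod_two_cols[OF b_def[symmetric], of v v' post "\<lambda>k. I ! \<sigma> k"]
      by (simp_all add: comp_def P_def Q_def u_def w_def)
    have central: "c z * (X * Y) = X * (c z * Y)" for z X Y
      by (metis c_central mult.assoc)
    have "T (pre @ [x, y] @ post) \<sigma> + T (pre @ [x, y] @ post) (\<sigma> \<circ> adj_swap b)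
        + (T (pre @ [y, x] @ post) \<sigma> + T (pre @ [y, x] @ post) (\<sigma> \<circ> adj_swap b))
        = e * (P * ((x u * y w - c (q w u) * (x w * y u) + y u * x w - c (q w u) * (y w * x u)) * Q))"
      unfolding T_def e_swap cols e_def[symmetric]
      by (simp add: algebra_simps central)
    also have "\<dots> = 0" by (simp add: rel)
    finally show ?thesis .
  qed
  have "cdet_cols c q I (pre @ [x, y] @ post) + cdet_cols c q I (pre @ [y, x] @ post) = 0"
    unfolding pairs sum.distrib[symmetric] using cancel by simp
  then show ?thesis by (simp add: eq_neg_iff_add_eq_0)
qed

lemma cdet_cols_swap:
  assumes len: "length (pre @ [x] @ mid @ [y] @ post) = length I"
    and I: "sorted_wrt (<) I" "set I \<subseteq> {..<n}" and xy: "manin_pair c q n x y"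
    and mid: "\<forall>z\<in>set mid. manin_pair c q n x z \<and> manin_pair c q n z y"
  shows "cdet_cols c q I (pre @ [x] @ mid @ [y] @ post) = - cdet_cols c q I (pre @ [y] @ mid @ [x] @ post)"
  using len mid
proof (induction mid arbitrary: pre)
  case Nil
  then show ?case using cdet_cols_swap_adjacent[OF _ I xy, of pre post] by simp
next
  case (Cons z mid)
  let ?D = "cdet_cols c q I"
  have xz: "manin_pair c q n x z" and zy: "manin_pair c q n z y" using Cons.prems by auto
  have "?D (pre @ [x] @ (z # mid) @ [y] @ post) = - ?D (pre @ [z, x] @ (mid @ [y] @ post))"
    using cdet_cols_swap_adjacent[OF _ I xz] Cons.prems(1) by simp
  also have "?D (pre @ [z, x] @ (mid @ [y] @ post)) = - ?D ((pre @ [z]) @ [y] @ mid @ [x] @ post)"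
    using Cons.IH[of "pre @ [z]"] Cons.prems by simp
  also have "?D ((pre @ [z]) @ [y] @ mid @ [x] @ post) = - ?D (pre @ [y, z] @ (mid @ [x] @ post))"
    using cdet_cols_swap_adjacent[OF _ I zy] Cons.prems(1) by simp
  finally show ?case by simp
qed

lemma cdet_cols_repeated_col:
  assumes "length (pre @ [x] @ mid @ [x] @ post) = length I"
    and "sorted_wrt (<) I" "set I \<subseteq> {..<n}" "manin_pair c q n x x"
    and "\<forall>z\<in>set mid. manin_pair c q n x z \<and> manin_pair c q n z x"
  shows "cdet_cols c q I (pre @ [x] @ mid @ [x] @ post) = 0"
  using cdet_cols_swap[OF assms] by (rule self_eq_neg_imp_zero)

lemma cdet_cols_permute_list_comp_adj_swap:
  assumes len: "length vs = length I" and I: "sorted_wrt (<) I" "set I \<subseteq> {..<n}"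
    and pairs: "\<forall>x\<in>set vs. \<forall>y\<in>set vs. manin_pair c q n x y"
    and \<sigma>: "\<sigma> permutes {0..<length I}" and b: "Suc b < length I"
  shows "cdet_cols c q I (permute_list (\<sigma> \<circ> adj_swap b) vs) = - cdet_cols c q I (permute_list \<sigma> vs)"
proof -
  define L where "L = permute_list \<sigma> vs"
  have lL: "Suc b < length L" using b len by (simp add: L_def)
  have "permute_list (\<sigma> \<circ> adj_swap b) vs = permute_list (adj_swap b) L"
    unfolding L_def using adj_swap_permutes[of b "length vs"] b len
    by (simp add: permute_list_compose lessThan_atLeast0)
  also have "\<dots> = take b L @ [L ! Suc b, L ! b] @ drop (Suc (Suc b)) L"
    by (rule permute_list_adj_swap[OF lL])
  finally have perm_eq: "permute_list (\<sigma> \<circ> adj_swap b) vs = take b L @ [L ! Suc b, L ! b] @ drop (Suc (Suc b)) L" .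
  have "cdet_cols c q I (permute_list (\<sigma> \<circ> adj_swap b) vs)
      = - cdet_cols c q I (take b L @ [L ! b, L ! Suc b] @ drop (Suc (Suc b)) L)"
    unfolding perm_eq
  proof (rule cdet_cols_swap_adjacent[OF _ I])
    have "set L = set vs" unfolding L_def using \<sigma> len by (simp add: lessThan_atLeast0)
    then show "manin_pair c q n (L ! Suc b) (L ! b)"
      using pairs lL by (metis Suc_lessD nth_mem)
  qed (use lL len in \<open>simp add: L_def\<close>)
  also have "take b L @ [L ! b, L ! Suc b] @ drop (Suc (Suc b)) L = L"
    using lL by (simp add: Cons_nth_drop_Suc)
  finally show ?thesis unfolding L_def .
qed

lemma cdet_cols_permute_list:
  assumes len: "length vs = length I" and I: "sorted_wrt (<) I" "set I \<subseteq> {..<n}"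
    and pairs: "\<forall>x\<in>set vs. \<forall>y\<in>set vs. manin_pair c q n x y"
    and \<tau>: "\<tau> permutes {0..<length I}"
  shows "cdet_cols c q I (permute_list \<tau> vs) = c (qeps (\<lambda>_ _. 1) I \<tau>) * cdet_cols c q I vs"
  using \<tau>
proof (induction "card (inversions (length I) \<tau>)" arbitrary: \<tau> rule: less_induct)
  case less
  let ?r = "length I"
  show ?case
  proof (cases "\<exists>b. Suc b < ?r \<and> \<tau> (Suc b) < \<tau> b")
    case False
    have "\<tau> b < \<tau> (Suc b)" if "Suc b < ?r" for b
      using False that permutes_inj[OF less.prems] by (metis injD linorder_neqE_nat n_not_Suc_n)
    then have "\<tau> = id" by (rule permutes_ascending_eq_id[OF less.prems])
    moreover have "inversions ?r id = {}" by (auto simp: inversions_def)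
    ultimately show ?thesis by (simp add: qeps_eq_prod_inversions c_one)
  next
    case True
    then obtain b where b: "Suc b < ?r" and descent: "\<tau> (Suc b) < \<tau> b" by blast
    define \<sigma> where "\<sigma> = \<tau> \<circ> adj_swap b"
    have \<sigma>: "\<sigma> permutes {0..<?r}"
      unfolding \<sigma>_def by (rule permutes_compose[OF adj_swap_permutes[OF b] less.prems])
    have lt: "\<sigma> b < \<sigma> (Suc b)" using descent by (simp add: \<sigma>_def)
    have \<tau>_eq: "\<tau> = \<sigma> \<circ> adj_swap b" by (simp add: \<sigma>_def)
    have "card (inversions ?r \<sigma>) < card (inversions ?r \<tau>)"
      unfolding \<tau>_eq card_inversions_comp_adj_swap[OF b lt] by simp
    then have "cdet_cols c q I (permute_list \<sigma> vs) = c (qeps (\<lambda>_ _. 1) I \<sigma>) * cdet_cols c q I vs"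
      using less.hyps \<sigma> by blast
    then show ?thesis
      unfolding \<tau>_eq cdet_cols_permute_list_comp_adj_swap[OF len I pairs \<sigma> b]
        qeps_comp_adj_swap[OF b lt]
      by (simp add: c_minus)
  qed
qed

end

section \<open>The Capelli-type identity\<close>

definition col :: "(nat \<Rightarrow> nat \<Rightarrow> 'a) \<Rightarrow> nat \<Rightarrow> nat \<Rightarrow> 'a" where
  "col X j = (\<lambda>i. X i j)"

locale capelli_setting = complex_algebra c for c :: "complex \<Rightarrow> 'a::ring_1" +
  fixes q :: "nat \<Rightarrow> nat \<Rightarrow> complex" and n m s :: nat and M N H :: "nat \<Rightarrow> nat \<Rightarrow> 'a"
  assumes manin: "q1_manin c n m q M"
    and comm: "\<And>i j k l. i < n \<Longrightarrow> j < m \<Longrightarrow> k < m \<Longrightarrow> l < s \<Longrightarrow>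
                 M i j * N k l - N k l * M i j = - (if j = k then H i l else 0)"
begin

lemma manin_pair_cols:
  assumes "j < m" "j' < m"
  shows "manin_pair c q n (col M j) (col M j')"
proof -
  have less: "manin_pair c q n (col M j) (col M j')" if "j < j'" "j' < m" for j j'
    unfolding manin_pair_def col_def
  proof (intro allI impI)
    fix u w assume "u < w" "w < n"
    then have "M u j * M w j' - c (q w u * 1) * M w j' * M u j + c 1 * M u j' * M w j
          - c (q w u) * M w j * M u j' = 0"
      using manin that unfolding q1_manin_def by blast
    then show "M u j * M w j' - c (q w u) * (M w j * M u j') + M u j' * M w j
        - c (q w u) * (M w j' * M u j) = 0"
      by (simp add: c_one algebra_simps)
  qed
  show ?thesis
  proof (cases j j' rule: linorder_cases)
    case equal
    show ?thesis unfolding manin_pair_def col_def equal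
    proof (intro allI impI)
      fix u w assume "u < w" "w < n"
      then have "M u j' * M w j' = c (q w u) * M w j' * M u j'"
        using manin assms unfolding q1_manin_def by blast
      then show "M u j' * M w j' - c (q w u) * (M w j' * M u j') + M u j' * M w j'
          - c (q w u) * (M w j' * M u j') = 0"
        by (simp add: mult.assoc)
    qed
  qed (use less assms manin_pair_sym in blast)+
qed

text \<open>Since H u l = N j l M u j - M u j N j l, the relation follows from
  M u j M w j = q_wu M w j M u j by taking commutators with N j l.\<close>
lemma manin_pair_col_H:
  assumes j: "j < m" and l: "l < s"
  shows "manin_pair c q n (col M j) (col H l)"
  unfolding manin_pair_def col_def
proof (intro allI impI)
  fix u w assume uw: "u < w" "w < n"
  define A where "A = M u j"
  define B where "B = M w j"
  define Z where "Z = N j l"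
  define Q where "Q = c (q w u)"
  have hu: "H u l = Z * A - A * Z" using comm[of u j j l] uw j l unfolding A_def Z_def
    by (simp add: algebra_simps)
  have hw: "H w l = Z * B - B * Z" using comm[of w j j l] uw j l unfolding B_def Z_def
    by (simp add: algebra_simps)
  have AB: "A * B = Q * (B * A)"
    using manin uw j unfolding q1_manin_def A_def B_def Q_def by (simp add: mult.assoc)
  have AB': "A * (B * X) = Q * (B * (A * X))" for X
    using AB by (metis mult.assoc)
  have QZ: "Z * (Q * X) = Q * (Z * X)" for X
    unfolding Q_def by (metis c_central mult.assoc)
  have "A * H w l - Q * (B * H u l) + H u l * B - Q * (H w l * A) = 0"
    unfolding hu hw by (simp add: algebra_simps AB' AB QZ)
  then show "M u j * H w l - c (q w u) * (M w j * H u l) + H u l * M w j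
      - c (q w u) * (H w l * M u j) = 0"
    unfolding A_def B_def Q_def .
qed

end

locale capelli_rows = capelli_setting +
  fixes I K :: "nat list"
  assumes I_sorted: "sorted_wrt (<) I" and I_range: "set I \<subseteq> {..<n}"
    and K_length: "length K = length I" and K_range: "set K \<subseteq> {..<s}"
begin

lemma K_nth_less: "b < length I \<Longrightarrow> K ! b < s"
  using K_range K_length by (metis lessThan_iff nth_mem subsetD)

definition capelli_col :: "nat \<Rightarrow> nat \<Rightarrow> 'a" where
  "capelli_col b = (\<lambda>i. matmul m M N i (K ! b) + of_nat (length I - Suc b) * H i (K ! b))"

lemma capelli_sum_eq_cdet_cols:
  "(\<Sum>\<sigma> | \<sigma> permutes {0..<length I}.
      c (qeps q I \<sigma>) * prod_list (map (\<lambda>b.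
          matmul m M N (I ! \<sigma> b) (K ! b) + of_nat (length I - Suc b) * H (I ! \<sigma> b) (K ! b))
        [0..<length I]))
   = cdet_cols c q I (map capelli_col [0..<length I])"
  unfolding cdet_cols_def col_prod_eq_prod_list capelli_col_def
  by (intro sum.cong refl arg_cong2[where f = "(*)"] arg_cong[where f = prod_list] map_cong) simp_all

lemma cdet_cols_M_col_times_N:
  assumes p: "p < length I" and j: "j < m"
    and J: "Suc (length pre + length J) = length I" "set J \<subseteq> {..<m}"
  shows "cdet_cols c q I (pre @ [\<lambda>i. M i j * N j (K ! p)] @ map (col M) J)
       = cdet_cols c q I (pre @ [col M j] @ map (col M) J) * N j (K ! p)
         + (\<Sum>t<length J. if J ! t = j
              then cdet_cols c q I (pre @ [col M j] @ (map (col M) J)[t := col H (K ! p)]) else 0)"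
proof -
  define d where "d t = (\<lambda>i. if J ! t = j then H i (K ! p) else 0)" for t
  have "cdet_cols c q I (pre @ [\<lambda>i. col M j i * N j (K ! p)] @ map (col M) J)
      = cdet_cols c q I (pre @ [col M j] @ map (col M) J) * N j (K ! p)
        + (\<Sum>t<length (map (col M) J). cdet_cols c q I (pre @ [col M j] @ (map (col M) J)[t := d t]))"
  proof (rule cdet_cols_commute_right)
    fix t i assume t: "t < length (map (col M) J)" and i: "i \<in> set I"
    have "J ! t < m" using t J(2) by (simp add: subset_iff)
    moreover have "i < n" using i I_range by auto
    ultimately have "M i (J ! t) * N j (K ! p) - N j (K ! p) * M i (J ! t) = - d t i"
      using comm K_nth_less[OF p] j unfolding d_def by simp
    then show "N j (K ! p) * (map (col M) J ! t) i = (map (col M) J ! t) i * N j (K ! p) + d t i"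
      using t by (simp add: col_def algebra_simps eq_neg_iff_add_eq_0)
  qed (use J in simp)
  also have "(\<Sum>t<length (map (col M) J). cdet_cols c q I (pre @ [col M j] @ (map (col M) J)[t := d t]))
      = (\<Sum>t<length J. if J ! t = j
           then cdet_cols c q I (pre @ [col M j] @ (map (col M) J)[t := col H (K ! p)]) else 0)"
  proof (rule sum.cong)
    fix t assume t: "t \<in> {..<length J}"
    show "cdet_cols c q I (pre @ [col M j] @ (map (col M) J)[t := d t])
      = (if J ! t = j then cdet_cols c q I (pre @ [col M j] @ (map (col M) J)[t := col H (K ! p)]) else 0)"
    proof (cases "J ! t = j")
      case True
      then have "d t = col H (K ! p)" unfolding d_def col_def by simp
      then show ?thesis using True by simp
    next
      case False
      then have "d t = (\<lambda>i. 0)" unfolding d_def by simp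
      then show ?thesis
        using False t cdet_cols_zero_col[of c q I "pre @ col M j # take t (map (col M) J)"]
        by (simp add: upd_conv_take_nth_drop)
    qed
  qed simp
  finally show ?thesis unfolding col_def .
qed

lemma cdet_cols_H_col_moved:
  assumes p: "p < length I" and t: "t < length J"
    and J: "Suc (length pre + length J) = length I" "set J \<subseteq> {..<m}"
  shows "cdet_cols c q I (pre @ [col M (J ! t)] @ (map (col M) J)[t := col H (K ! p)])
       = - cdet_cols c q I (pre @ [col H (K ! p)] @ map (col M) J)"
proof -
  have Jt: "J ! t < m" using t J(2) by (simp add: subset_iff)
  have upd: "(map (col M) J)[t := col H (K ! p)]
      = map (col M) (take t J) @ [col H (K ! p)] @ map (col M) (drop (Suc t) J)"
    using t by (simp add: upd_conv_take_nth_drop take_map drop_map)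
  have orig: "map (col M) J = map (col M) (take t J) @ [col M (J ! t)] @ map (col M) (drop (Suc t) J)"
    using arg_cong[OF id_take_nth_drop[OF t], of "map (col M)"] by simp
  have mid: "\<forall>z\<in>set (map (col M) (take t J)).
      manin_pair c q n (col M (J ! t)) z \<and> manin_pair c q n z (col H (K ! p))"
    using J(2) manin_pair_cols[OF Jt] manin_pair_col_H[OF _ K_nth_less[OF p]]
    by (auto dest!: in_set_takeD)
  have "cdet_cols c q I (pre @ [col M (J ! t)] @ map (col M) (take t J) @ [col H (K ! p)]
          @ map (col M) (drop (Suc t) J))
      = - cdet_cols c q I (pre @ [col H (K ! p)] @ map (col M) (take t J) @ [col M (J ! t)]
          @ map (col M) (drop (Suc t) J))"
    by (rule cdet_cols_swap[OF _ I_sorted I_range manin_pair_col_H[OF Jt K_nth_less[OF p]] mid])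
      (use J t in simp)
  then show ?thesis unfolding upd by (simp only: orig[symmetric])
qed

text \<open>The diagonal correction (r - 1 - p) H in column p of C is exactly cancelled by the
  commutators of N with the r - 1 - p columns of M to its right.\<close>
lemma cdet_cols_expand_capelli_col:
  assumes p: "p < length I" and pre: "length pre = p"
    and J: "length J = length I - Suc p" "set J \<subseteq> {..<m}"
  shows "cdet_cols c q I (pre @ [capelli_col p] @ map (col M) J)
       = (\<Sum>j<m. cdet_cols c q I (pre @ [col M j] @ map (col M) J) * N j (K ! p))"
proof -
  let ?D = "cdet_cols c q I" and ?Ms = "map (col M) J" and ?Kp = "K ! p"
  define D0 where "D0 = ?D (pre @ [col H ?Kp] @ ?Ms)"
  have len: "Suc (length pre + length J) = length I" using p pre J by simp
  have "capelli_col p = (\<lambda>i. (\<Sum>j<m. M i j * N j ?Kp) + of_nat (length J) * H i ?Kp)"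
    unfolding capelli_col_def matmul_def J ..
  then have "?D (pre @ [capelli_col p] @ ?Ms)
      = ?D (pre @ [\<lambda>i. (\<Sum>j<m. M i j * N j ?Kp)] @ ?Ms) + ?D (pre @ [\<lambda>i. of_nat (length J) * H i ?Kp] @ ?Ms)"
    by (simp only:) (rule cdet_cols_add)
  also have "?D (pre @ [\<lambda>i. of_nat (length J) * H i ?Kp] @ ?Ms) = of_nat (length J) * D0"
    unfolding D0_def col_def by (rule cdet_cols_mult_central) (simp add: mult_of_nat_commute)
  also have "?D (pre @ [\<lambda>i. (\<Sum>j<m. M i j * N j ?Kp)] @ ?Ms)
      = (\<Sum>j<m. ?D (pre @ [\<lambda>i. M i j * N j ?Kp] @ ?Ms))"
    by (rule cdet_cols_sum)
  also have "\<dots> = (\<Sum>j<m. ?D (pre @ [col M j] @ ?Ms) * N j ?Kp)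
        + (\<Sum>j<m. \<Sum>t<length J. if J ! t = j then ?D (pre @ [col M j] @ ?Ms[t := col H ?Kp]) else 0)"
    using cdet_cols_M_col_times_N[OF p _ len J(2)] by (simp add: sum.distrib)
  also have "(\<Sum>j<m. \<Sum>t<length J. if J ! t = j then ?D (pre @ [col M j] @ ?Ms[t := col H ?Kp]) else 0)
      = (\<Sum>t<length J. ?D (pre @ [col M (J ! t)] @ ?Ms[t := col H ?Kp]))"
    using J(2) by (subst sum.swap) (simp add: subset_iff)
  also have "\<dots> = (\<Sum>t<length J. - D0)"
    unfolding D0_def using cdet_cols_H_col_moved[OF p _ len J(2)] by simp
  finally show ?thesis by simp
qed

definition N_prod :: "nat list \<Rightarrow> nat \<Rightarrow> 'a" where
  "N_prod J p = prod_list (map (\<lambda>i. N (J ! i) (K ! (p + i))) [0..<length J])"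

lemma N_prod_Nil [simp]: "N_prod [] p = 1"
  by (simp add: N_prod_def)

lemma N_prod_Cons [simp]: "N_prod (j # J) p = N j (K ! p) * N_prod J (Suc p)"
proof -
  have "[0..<length (j # J)] = 0 # map Suc [0..<length J]"
    by (simp add: upt_conv_Cons map_Suc_upt del: upt_Suc)
  then show ?thesis unfolding N_prod_def by (simp add: o_def)
qed

lemma cdet_cols_expand_capelli_cols:
  assumes "d \<le> length I" "length pre = length I - d"
  shows "cdet_cols c q I (pre @ map capelli_col [length I - d..<length I])
       = (\<Sum>J | length J = d \<and> set J \<subseteq> {..<m}.
            cdet_cols c q I (pre @ map (col M) J) * N_prod J (length I - d))"
  using assms
proof (induction d arbitrary: pre)
  case 0
  have "{J. length J = 0 \<and> set J \<subseteq> {..<m}} = {[]}" by auto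
  then show ?case by simp
next
  case (Suc d)
  let ?r = "length I" and ?Lists = "\<lambda>d. {J. length J = d \<and> set J \<subseteq> {..<m}}"
  define p where "p = ?r - Suc d"
  have p: "p < ?r" "Suc p = ?r - d" using Suc.prems unfolding p_def by auto
  have "cdet_cols c q I (pre @ map capelli_col [p..<?r])
      = cdet_cols c q I ((pre @ [capelli_col p]) @ map capelli_col [?r - d..<?r])"
    using p by (simp add: upt_conv_Cons)
  also have "\<dots> = (\<Sum>J\<in>?Lists d. cdet_cols c q I ((pre @ [capelli_col p]) @ map (col M) J) * N_prod J (?r - d))"
    by (rule Suc.IH) (use Suc.prems p p_def in auto)
  also have "\<dots> = (\<Sum>J\<in>?Lists d. \<Sum>j<m. cdet_cols c q I (pre @ map (col M) (j # J)) * N_prod (j # J) p)"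
  proof (rule sum.cong[OF refl])
    fix J assume "J \<in> ?Lists d"
    then show "cdet_cols c q I ((pre @ [capelli_col p]) @ map (col M) J) * N_prod J (?r - d)
        = (\<Sum>j<m. cdet_cols c q I (pre @ map (col M) (j # J)) * N_prod (j # J) p)"
      using cdet_cols_expand_capelli_col[OF p(1), of pre J] Suc.prems p
      by (simp add: p_def sum_distrib_right mult.assoc flip: p(2))
  qed
  also have "\<dots> = (\<Sum>(j, J)\<in>{..<m} \<times> ?Lists d. cdet_cols c q I (pre @ map (col M) (j # J)) * N_prod (j # J) p)"
    by (subst sum.swap) (rule sum.cartesian_product)
  also have "\<dots> = (\<Sum>J\<in>?Lists (Suc d). cdet_cols c q I (pre @ map (col M) J) * N_prod J p)"
  proof -
    have "?Lists (Suc d) = (\<lambda>(j, J). j # J) ` ({..<m} \<times> ?Lists d)"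
      by (auto simp: length_Suc_conv image_iff)
    then show ?thesis by (simp add: sum.reindex inj_on_def case_prod_beta)
  qed
  finally show ?case unfolding p_def .
qed

lemma cdet_cols_M_cols_nondistinct:
  assumes "length J = length I" "set J \<subseteq> {..<m}" "\<not> distinct J"
  shows "cdet_cols c q I (map (col M) J) = 0"
proof -
  obtain xs ys zs y where J: "J = xs @ [y] @ ys @ [y] @ zs"
    using not_distinct_decomp[OF assms(3)] by blast
  have y: "y < m" and ys: "set ys \<subseteq> {..<m}" using assms(2) unfolding J by auto
  have "cdet_cols c q I (map (col M) xs @ [col M y] @ map (col M) ys @ [col M y] @ map (col M) zs) = 0"
    by (rule cdet_cols_repeated_col[OF _ I_sorted I_range manin_pair_cols[OF y y]])
      (use assms(1) ys manin_pair_cols[OF y] manin_pair_cols[OF _ y] J in auto)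
  then show ?thesis unfolding J by simp
qed

lemma cdet_cols_M_cols_permute_list:
  assumes S: "length S = length I" "set S \<subseteq> {..<m}" and \<tau>: "\<tau> permutes {..<length I}"
  shows "cdet_cols c q I (map (col M) (permute_list \<tau> S))
       = c (qeps (\<lambda>_ _. 1) S \<tau>) * cdet_cols c q I (map (col M) S)"
proof -
  have "cdet_cols c q I (map (col M) (permute_list \<tau> S))
      = cdet_cols c q I (permute_list \<tau> (map (col M) S))"
    using \<tau> S(1) by (simp add: permute_list_map)
  also have "\<dots> = c (qeps (\<lambda>_ _. 1) I \<tau>) * cdet_cols c q I (map (col M) S)"
    using S \<tau>
    by (intro cdet_cols_permute_list[OF _ I_sorted I_range])
      (auto simp: lessThan_atLeast0 subset_iff intro!: manin_pair_cols)
  finally show ?thesis using qeps_const_one_length[OF S(1)] by simp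
qed

lemma cdet_eq_sum_N_prod:
  assumes "length S = length I"
  shows "cdet c S K N
       = (\<Sum>\<tau> | \<tau> permutes {..<length I}. c (qeps (\<lambda>_ _. 1) S \<tau>) * N_prod (permute_list \<tau> S) 0)"
  unfolding cdet_def cdetq_def N_prod_def assms lessThan_atLeast0
  by (intro sum.cong refl arg_cong[where f = "\<lambda>p. _ * prod_list p"] map_cong)
    (auto simp: assms permute_list_nth lessThan_atLeast0)

lemma sum_permute_M_cols_N_prod:
  assumes S: "length S = length I" "set S \<subseteq> {..<m}"
  shows "(\<Sum>\<tau> | \<tau> permutes {..<length I}.
            cdet_cols c q I (map (col M) (permute_list \<tau> S)) * N_prod (permute_list \<tau> S) 0)
       = cdetq c q I S M * cdet c S K N"
proof -
  have "cdet_cols c q I (map (col M) (permute_list \<tau> S)) * N_prod (permute_list \<tau> S) 0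
      = cdet_cols c q I (map (col M) S) * (c (qeps (\<lambda>_ _. 1) S \<tau>) * N_prod (permute_list \<tau> S) 0)"
    if "\<tau> permutes {..<length I}" for \<tau>
    using cdet_cols_M_cols_permute_list[OF S that] by (simp add: c_central mult.assoc)
  moreover have "cdetq c q I S M = cdet_cols c q I (map (col M) S)"
    using cdetq_eq_cdet_cols[OF S(1), of c q M] by (simp add: col_def[abs_def])
  ultimately show ?thesis by (simp add: cdet_eq_sum_N_prod[OF S(1)] sum_distrib_left)
qed

lemma capelli_cauchy_binet:
  "(\<Sum>\<sigma> | \<sigma> permutes {0..<length I}.
      c (qeps q I \<sigma>) * prod_list (map (\<lambda>b.
          matmul m M N (I ! \<sigma> b) (K ! b) + of_nat (length I - Suc b) * H (I ! \<sigma> b) (K ! b))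
        [0..<length I]))
   = (\<Sum>J | length J = length I \<and> sorted_wrt (<) J \<and> set J \<subseteq> {..<m}.
        cdetq c q I J M * cdet c J K N)"
proof -
  let ?F = "\<lambda>J. cdet_cols c q I (map (col M) J) * N_prod J 0"
  have "(\<Sum>\<sigma> | \<sigma> permutes {0..<length I}.
      c (qeps q I \<sigma>) * prod_list (map (\<lambda>b.
          matmul m M N (I ! \<sigma> b) (K ! b) + of_nat (length I - Suc b) * H (I ! \<sigma> b) (K ! b))
        [0..<length I]))
      = (\<Sum>J | length J = length I \<and> set J \<subseteq> {..<m}. ?F J)"
    using cdet_cols_expand_capelli_cols[of "length I" "[]"] by (simp add: capelli_sum_eq_cdet_cols)
  also have "\<dots> = (\<Sum>S | length S = length I \<and> sorted_wrt (<) S \<and> set S \<subseteq> {..<m}.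
                    \<Sum>\<tau> | \<tau> permutes {..<length I}. ?F (permute_list \<tau> S))"
    by (rule sum_lists_eq_sum_sorted_permute_list) (simp_all add: cdet_cols_M_cols_nondistinct)
  also have "\<dots> = (\<Sum>J | length J = length I \<and> sorted_wrt (<) J \<and> set J \<subseteq> {..<m}.
                    cdetq c q I J M * cdet c J K N)"
    by (rule sum.cong) (simp_all add: sum_permute_M_cols_N_prod)
  finally show ?thesis .
qed

end

context capelli_setting
begin

lemma capelli_cauchy_binet_minor:
  assumes "sorted_wrt (<) I" "set I \<subseteq> {..<n}" "length K = length I" "set K \<subseteq> {..<s}"
  shows "(\<Sum>\<sigma> | \<sigma> permutes {0..<length I}.
      c (qeps q I \<sigma>) * prod_list (map (\<lambda>b.
          matmul m M N (I ! \<sigma> b) (K ! b) + of_nat (length I - Suc b) * H (I ! \<sigma> b) (K ! b))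
        [0..<length I]))
   = (\<Sum>J | length J = length I \<and> sorted_wrt (<) J \<and> set J \<subseteq> {..<m}.
        cdetq c q I J M * cdet c J K N)"
proof -
  interpret capelli_rows c q n m s M N H I K
    by unfold_locales (fact assms)+
  show ?thesis by (rule capelli_cauchy_binet)
qed

lemma capelli_cauchy_binet_square:
  assumes "m = n" "s = n"
  shows "cdetq c q [0..<n] [0..<n] (\<lambda>i l. matmul m M N i l + of_nat (n - Suc l) * H i l)
       = cdetq c q [0..<n] [0..<n] M * cdet c [0..<n] [0..<n] N"
proof -
  interpret capelli_rows c q n m s M N H "[0..<n]" "[0..<n]"
    by unfold_locales (use assms in auto)
  have cols: "map (\<lambda>l i. matmul m M N i l + of_nat (n - Suc l) * H i l) [0..<n] = map capelli_col [0..<n]"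
    by (rule map_cong) (simp_all add: capelli_col_def)
  have "cdetq c q [0..<n] [0..<n] (\<lambda>i l. matmul m M N i l + of_nat (n - Suc l) * H i l)
      = cdet_cols c q [0..<n] (map capelli_col [0..<n])"
    unfolding cols[symmetric] by (rule cdetq_eq_cdet_cols) simp
  also have "\<dots> = (\<Sum>J | length J = n \<and> sorted_wrt (<) J \<and> set J \<subseteq> {..<m}.
      cdetq c q [0..<n] J M * cdet c J [0..<n] N)"
    using capelli_cauchy_binet capelli_sum_eq_cdet_cols by simp
  finally show ?thesis using assms by (simp add: sorted_lists_upt_eq)
qed

end

theorem mainTheorem11:
  fixes c :: "complex \<Rightarrow> 'a::ring_1"
    and n m s :: nat
    and q :: "nat \<Rightarrow> nat \<Rightarrow> complex"
    and M N H :: "nat \<Rightarrow> nat \<Rightarrow> 'a"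
  assumes alg: "calg_emb c"
    and par: "parametric_mat n q"
    and manin: "q1_manin c n m q M"
    and comm: "\<And>i j k l. i < n \<Longrightarrow> j < m \<Longrightarrow> k < m \<Longrightarrow> l < s \<Longrightarrow>
                 M i j * N k l - N k l * M i j = - (if j = k then H i l else 0)"
  shows "(\<forall>r I K. r \<le> m \<and> length I = r \<and> sorted_wrt (<) I \<and> set I \<subseteq> {..<n}
            \<and> length K = r \<and> set K \<subseteq> {..<s} \<longrightarrow>
           (\<Sum>\<sigma> | \<sigma> permutes {0..<r}.
              c (qeps q I \<sigma>) * prod_list (map (\<lambda>b.
                  matmul m M N (I ! \<sigma> b) (K ! b) + of_nat (r - Suc b) * H (I ! \<sigma> b) (K ! b))
                [0..<r]))
           = (\<Sum>J | length J = r \<and> sorted_wrt (<) J \<and> set J \<subseteq> {..<m}.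
                cdetq c q I J M * cdet c J K N))
       \<and> (m = n \<and> s = n \<longrightarrow>
           cdetq c q [0..<n] [0..<n] (\<lambda>i l. matmul m M N i l + of_nat (n - Suc l) * H i l)
           = cdetq c q [0..<n] [0..<n] M * cdet c [0..<n] [0..<n] N)"
proof -
  interpret capelli_setting c q n m s M N H
    by unfold_locales (fact alg manin comm)+
  show ?thesis
    using capelli_cauchy_binet_minor capelli_cauchy_binet_square by auto
qed

end
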